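(* Let $\mathcal{H}_1=\mathcal{H}_{A_1}\otimes\mathcal{H}_{B_1}$ and $\mathcal{H}_2=\mathcal{H}_{A_2}\otimes\mathcal{H}_{B_2}$ be finite-dimensional bipartite Hilbert spaces, and let $N,K\geq 1$ be integers. Let $\sigma$ be a positive semidefinite operator on $\mathcal{H}_1$ with Schmidt number $N$ (with respect to the split $A_1|B_1$). Let $\eta$ be an operator on $\mathcal{H}_2$ that is positive on states with Schmidt number $KN$ (with respect to the split $A_2|B_2$). Then the operator $\sigma\otimes\eta$, acting on $\mathcal{H}_1\otimes\mathcal{H}_2\cong\mathcal{H}_A\otimes\mathcal{H}_B$ with $\mathcal{H}_A=\mathcal{H}_{A_1}\otimes\mathcal{H}_{A_2}$ and $\mathcal{H}_B=\mathcal{H}_{B_1}\otimes\mathcal{H}_{B_2}$, is positive on states with Schmidt number $K$ (with respect to the split $A|B$).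
   Context: The Schmidt rank of a pure vector $|\psi\rangle\in\mathcal{H}_X\otimes\mathcal{H}_Y$ is the number of nonzero terms in its Schmidt decomposition. The Schmidt number of a positive semidefinite operator $\rho$ on $\mathcal{H}_X\otimes\mathcal{H}_Y$ is the smallest $k$ such that $\rho$ can be written as a nonnegative combination of projectors $|\psi_i\rangle\langle\psi_i|$ onto vectors of Schmidt rank at most $k$. A Hermitian operator $X$ is said to be positive on states with Schmidt number $k$ if $\langle\psi|X|\psi\rangle\geq 0$ for every vector $|\psi\rangle$ of Schmidt rank at most $k$ (equivalently $\mathrm{Tr}(X\rho)\geq 0$ for every state $\rho$ of Schmidt number at most $k$). *)

theory Defs
  imports "HOL-Analysis.Analysis"
begin

text \<open>Finite-dimensional Hilbert spaces are modelled as coordinate spaces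
  'i \<Rightarrow> complex over a finite basis type 'i.  A bipartite space
  H_X \<otimes> H_Y has basis 'x \<times> 'y.\<close>

type_synonym 'i vec = "'i \<Rightarrow> complex"
type_synonym 'i op = "'i \<Rightarrow> 'i \<Rightarrow> complex"

definition inner_c :: "('i::finite) vec \<Rightarrow> 'i vec \<Rightarrow> complex" where
  "inner_c u v = (\<Sum>x\<in>UNIV. cnj (u x) * v x)"

definition apply_op :: "('i::finite) op \<Rightarrow> 'i vec \<Rightarrow> 'i vec" where
  "apply_op X v = (\<lambda>x. \<Sum>y\<in>UNIV. X x y * v y)"

definition expect :: "('i::finite) vec \<Rightarrow> 'i op \<Rightarrow> complex" where
  "expect v X = inner_c v (apply_op X v)"

definition hermitian_op :: "('i::finite) op \<Rightarrow> bool" where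
  "hermitian_op X \<longleftrightarrow> (\<forall>x y. X y x = cnj (X x y))"

definition psd_op :: "('i::finite) op \<Rightarrow> bool" where
  "psd_op X \<longleftrightarrow> hermitian_op X \<and> (\<forall>v. 0 \<le> Re (expect v X))"

definition orthonormal_fam :: "nat \<Rightarrow> (nat \<Rightarrow> ('i::finite) vec) \<Rightarrow> bool" where
  "orthonormal_fam r e \<longleftrightarrow>
     (\<forall>i<r. \<forall>j<r. inner_c (e i) (e j) = (if i = j then 1 else 0))"

definition schmidt_decomp ::
  "(('x::finite) \<times> ('y::finite)) vec \<Rightarrow> nat \<Rightarrow> bool" where
  "schmidt_decomp psi r \<longleftrightarrow>
     (\<exists>(s::nat \<Rightarrow> real) (e::nat \<Rightarrow> 'x vec) (f::nat \<Rightarrow> 'y vec).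
        (\<forall>i<r. s i > 0) \<and> orthonormal_fam r e \<and> orthonormal_fam r f \<and>
        psi = (\<lambda>(x, y). \<Sum>i<r. complex_of_real (s i) * e i x * f i y))"

definition schmidt_rank :: "(('x::finite) \<times> ('y::finite)) vec \<Rightarrow> nat" where
  "schmidt_rank psi = (LEAST r. schmidt_decomp psi r)"

definition proj :: "('i::finite) vec \<Rightarrow> 'i op" where
  "proj psi = (\<lambda>x y. psi x * cnj (psi y))"

definition sn_le :: "(('x::finite) \<times> ('y::finite)) op \<Rightarrow> nat \<Rightarrow> bool" where
  "sn_le rho k \<longleftrightarrow>
     (\<exists>(n::nat) (c::nat \<Rightarrow> real) (psi::nat \<Rightarrow> ('x \<times> 'y) vec).
        (\<forall>i<n. c i \<ge> 0 \<and> schmidt_rank (psi i) \<le> k) \<and>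
        rho = (\<lambda>u v. \<Sum>i<n. complex_of_real (c i) * proj (psi i) u v))"

definition schmidt_number :: "(('x::finite) \<times> ('y::finite)) op \<Rightarrow> nat" where
  "schmidt_number rho = (LEAST k. sn_le rho k)"

definition pos_on_SN :: "(('x::finite) \<times> ('y::finite)) op \<Rightarrow> nat \<Rightarrow> bool" where
  "pos_on_SN X k \<longleftrightarrow> hermitian_op X \<and>
     (\<forall>psi. schmidt_rank psi \<le> k \<longrightarrow> 0 \<le> Re (expect psi X))"

definition tensor_op ::
  "(('a1::finite) \<times> ('b1::finite)) op \<Rightarrow> (('a2::finite) \<times> ('b2::finite)) op
     \<Rightarrow> (('a1 \<times> 'a2) \<times> ('b1 \<times> 'b2)) op" where
  "tensor_op S E = (\<lambda>((a1, a2), (b1, b2)) ((a1', a2'), (b1', b2')).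
      S (a1, b1) (a1', b1') * E (a2, b2) (a2', b2'))"

end

(*
  Decompose sigma = sum_i c_i |phi_i><phi_i| with c_i >= 0 and each phi_i of Schmidt rank at
  most N. For psi of Schmidt rank at most K,
    <psi| sigma \<otimes> eta |psi> = sum_i c_i <chi_i| eta |chi_i>,   chi_i = <phi_i|psi>,
  where chi_i is the partial inner product over H_A1 \<otimes> H_B1. Tensoring the Schmidt
  decompositions of phi_i and psi writes chi_i as a sum of at most K N product vectors, so
  every term is nonnegative by the hypothesis on eta.

  Two facts about the finite-dimensional model carry the work. Every vector has a Schmidt
  decomposition: maximising the Rayleigh quotient of the reduced operator gives the top
  singular term, and removing it shortens any representation as a sum of products, so
  induction on the length of such a sum applies. Every positive operator is a nonnegative
  combination of projectors (Cholesky elimination), so the least k in the definition of the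
  Schmidt number is attained.
*)

theory Submission
  imports Defs
begin

section \<open>Vectors and operators\<close>

lemma inner_c_add_left: "inner_c (\<lambda>x. u x + w x) z = inner_c u z + inner_c w z"
  by (simp add: inner_c_def ring_distribs sum.distrib)

lemma inner_c_add_right: "inner_c z (\<lambda>x. u x + w x) = inner_c z u + inner_c z w"
  by (simp add: inner_c_def ring_distribs sum.distrib)

lemma inner_c_scale_left: "inner_c (\<lambda>x. c * u x) z = cnj c * inner_c u z"
  by (simp add: inner_c_def sum_distrib_left mult_ac)

lemma inner_c_scale_right: "inner_c z (\<lambda>x. c * u x) = c * inner_c z u"
  by (simp add: inner_c_def sum_distrib_left mult_ac)

lemma inner_c_sum_right: "inner_c u (\<lambda>x. \<Sum>j\<in>J. c j * a j x) = (\<Sum>j\<in>J. c j * inner_c u (a j))"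
  by (simp add: inner_c_def sum_distrib_left mult_ac) (rule sum.swap)

lemma cnj_inner_c: "cnj (inner_c u w) = inner_c w u"
  by (simp add: inner_c_def mult_ac)

lemma inner_c_self: "inner_c u u = complex_of_real (\<Sum>x\<in>UNIV. (cmod (u x))\<^sup>2)"
  unfolding inner_c_def of_real_sum complex_norm_square by (simp only: mult.commute)

lemma Re_inner_c_self: "Re (inner_c u u) = (\<Sum>x\<in>UNIV. (cmod (u x))\<^sup>2)"
  by (simp add: inner_c_self)

lemma inner_c_self_real: "inner_c u u = complex_of_real (Re (inner_c u u))"
  by (simp add: inner_c_self)

lemma Re_inner_c_self_nonneg: "0 \<le> Re (inner_c u u)"
  by (simp add: Re_inner_c_self sum_nonneg)

lemma Re_inner_c_self_eq_0_iff: "Re (inner_c u u) = 0 \<longleftrightarrow> u = (\<lambda>_. 0)"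
  by (auto simp: Re_inner_c_self sum_nonneg_eq_0_iff)

lemma inner_c_delta_left: "inner_c (\<lambda>x. if x = a then 1 else 0) v = v a"
proof -
  have "inner_c (\<lambda>x. if x = a then 1 else 0) v = (\<Sum>x\<in>UNIV. if x = a then v x else 0)"
    unfolding inner_c_def by (rule sum.cong) auto
  then show ?thesis by simp
qed

lemma apply_op_add: "apply_op X (\<lambda>x. u x + w x) = (\<lambda>x. apply_op X u x + apply_op X w x)"
  by (simp add: apply_op_def ring_distribs sum.distrib)

lemma apply_op_scale: "apply_op X (\<lambda>x. c * u x) = (\<lambda>x. c * apply_op X u x)"
  by (simp add: apply_op_def sum_distrib_left mult_ac)

lemma apply_op_delta: "apply_op X (\<lambda>x. if x = a then 1 else 0) = (\<lambda>x. X x a)"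
proof
  fix x
  have "apply_op X (\<lambda>x. if x = a then 1 else 0) x = (\<Sum>y\<in>UNIV. if y = a then X x a else 0)"
    unfolding apply_op_def by (rule sum.cong) auto
  then show "apply_op X (\<lambda>x. if x = a then 1 else 0) x = X x a" by simp
qed

lemma expect_scale: "expect (\<lambda>x. c * w x) X = cnj c * c * expect w X"
  by (simp add: expect_def apply_op_scale inner_c_scale_left inner_c_scale_right)

lemma expect_add_scale:
  "expect (\<lambda>x. z x + t * w x) X = expect z X + cnj t * inner_c w (apply_op X z)
      + t * inner_c z (apply_op X w) + cnj t * t * expect w X"
  unfolding expect_def apply_op_add apply_op_scale inner_c_add_left inner_c_add_right
    inner_c_scale_left inner_c_scale_right by (simp add: algebra_simps)

lemma expect_diff: "expect z (\<lambda>u w. A u w - B u w) = expect z A - expect z B"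
  unfolding expect_def inner_c_def apply_op_def
  by (simp add: algebra_simps sum_subtractf sum_distrib_left)

lemma expect_smult: "expect z (\<lambda>u w. c * A u w) = c * expect z A"
  by (simp add: expect_def apply_op_def inner_c_def sum_distrib_left mult_ac)

lemma expect_proj: "expect z (proj v) = inner_c z v * inner_c v z"
  unfolding expect_def inner_c_def apply_op_def proj_def
  by (simp add: sum_distrib_left sum_distrib_right mult_ac) (rule sum.swap)

lemma hermitian_op_cnj: "hermitian_op X \<Longrightarrow> cnj (X x y) = X y x"
  unfolding hermitian_op_def by metis

lemma hermitian_op_inner_swap:
  assumes "hermitian_op X"
  shows "inner_c u (apply_op X w) = cnj (inner_c w (apply_op X u))"
proof -
  have "cnj (inner_c w (apply_op X u)) = (\<Sum>x\<in>UNIV. \<Sum>y\<in>UNIV. w x * (X y x * cnj (u y)))"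
    by (simp add: inner_c_def apply_op_def sum_distrib_left hermitian_op_cnj[OF assms])
  also have "\<dots> = (\<Sum>y\<in>UNIV. \<Sum>x\<in>UNIV. w x * (X y x * cnj (u y)))"
    by (rule sum.swap)
  also have "\<dots> = inner_c u (apply_op X w)"
    by (simp add: inner_c_def apply_op_def sum_distrib_left mult_ac)
  finally show ?thesis by simp
qed

text \<open>Along u + t X u the form equals 2 t |X u|^2 + t^2 <X u|X|X u>, which stays
  nonnegative for all real t only if X u = 0.\<close>
lemma psd_op_expect_zero_imp_null:
  assumes psd: "psd_op X" and zero: "Re (expect u X) = 0"
  shows "apply_op X u = (\<lambda>_. 0)"
proof -
  have herm: "hermitian_op X" and pos: "\<And>v. 0 \<le> Re (expect v X)"
    using psd unfolding psd_op_def by auto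
  define w where "w = apply_op X u"
  define a where "a = Re (inner_c w w)"
  define b where "b = Re (expect w X)"
  have b_nonneg: "b \<ge> 0" using pos b_def by auto
  have along_w: "Re (expect (\<lambda>x. u x + complex_of_real t * w x) X) = 2 * t * a + t\<^sup>2 * b" for t
  proof -
    have "inner_c w (apply_op X u) = complex_of_real a"
      unfolding w_def[symmetric] a_def by (rule inner_c_self_real)
    moreover from this have "inner_c u (apply_op X w) = complex_of_real a"
      using hermitian_op_inner_swap[OF herm, of u w] by simp
    ultimately show ?thesis
      unfolding expect_add_scale using zero by (simp add: b_def power2_eq_square)
  qed
  have "a = 0"
  proof (rule ccontr)
    assume "a \<noteq> 0"
    with Re_inner_c_self_nonneg have a_pos: "a > 0" unfolding a_def by (metis less_eq_real_def)
    define t where "t = - a / (b + 1)"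
    have "0 \<le> 2 * t * a + t\<^sup>2 * b" using pos along_w by metis
    also have "2 * t * a + t\<^sup>2 * b = a\<^sup>2 * (- b - 2) / (b + 1)\<^sup>2"
      using b_nonneg unfolding t_def by (simp add: field_simps power2_eq_square add_nonneg_eq_0_iff)
    also have "\<dots> < 0" using a_pos b_nonneg by (intro divide_neg_pos mult_pos_neg) auto
    finally show False by simp
  qed
  then show ?thesis using Re_inner_c_self_eq_0_iff unfolding a_def w_def by blast
qed

section \<open>A top eigenvector of a Hermitian operator\<close>

lemma norm_vec_eq_sqrt_inner_c:
  "norm (v :: complex ^ 'i::finite) = sqrt (Re (inner_c (vec_nth v) (vec_nth v)))"
  unfolding norm_vec_def L2_set_def Re_inner_c_self by simp

lemma rayleigh_quotient_attains_max:
  fixes X :: "('i::finite) op"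
  shows "\<exists>u. inner_c u u = 1 \<and> (\<forall>w. Re (expect w X) \<le> Re (expect u X) * Re (inner_c w w))"
proof -
  define G where "G v = Re (expect (vec_nth v) X)" for v :: "complex ^ 'i"
  have "continuous_on (sphere 0 1) G"
    unfolding G_def expect_def inner_c_def apply_op_def by (intro continuous_intros)
  moreover have "sphere (0 :: complex ^ 'i) 1 \<noteq> {}" by simp
  ultimately obtain v0 where v0: "v0 \<in> sphere 0 1" and max: "\<forall>v\<in>sphere 0 1. G v \<le> G v0"
    using continuous_attains_sup[OF compact_sphere] by blast
  define u where "u = vec_nth v0"
  have "Re (inner_c u u) = 1"
    using v0 unfolding u_def by (simp add: norm_vec_eq_sqrt_inner_c)
  then have u_unit: "inner_c u u = 1"
    by (subst inner_c_self_real) simp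
  have "Re (expect w X) \<le> Re (expect u X) * Re (inner_c w w)" for w
  proof (cases "w = (\<lambda>_. 0)")
    case True
    then show ?thesis by (simp add: expect_def inner_c_def)
  next
    case False
    define q where "q = sqrt (Re (inner_c w w))"
    have q_pos: "q > 0" and q_sq: "q\<^sup>2 = Re (inner_c w w)"
      using False Re_inner_c_self_nonneg[of w] Re_inner_c_self_eq_0_iff[of w]
      unfolding q_def by (auto simp: less_eq_real_def)
    define v where "v = (\<chi> x. complex_of_real (1 / q) * w x)"
    have v_nth: "vec_nth v = (\<lambda>x. complex_of_real (1 / q) * w x)"
      unfolding v_def by (rule ext) (simp only: vec_lambda_beta)
    have "Re (inner_c (vec_nth v) (vec_nth v)) = (1 / q)\<^sup>2 * Re (inner_c w w)"
      unfolding v_nth inner_c_scale_left inner_c_scale_right by (simp add: power2_eq_square)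
    then have "v \<in> sphere 0 1"
      using q_pos by (simp add: norm_vec_eq_sqrt_inner_c power_divide q_sq[symmetric])
    then have "G v \<le> G v0" using max by blast
    then have "(1 / q)\<^sup>2 * Re (expect w X) \<le> Re (expect u X)"
      unfolding G_def v_nth expect_scale u_def[symmetric] by (simp add: power2_eq_square)
    then show ?thesis using q_pos by (simp add: field_simps power2_eq_square q_sq[symmetric])
  qed
  with u_unit show ?thesis by blast
qed

text \<open>lam I - X is positive and its form vanishes at the maximiser u, so it annihilates u.\<close>
lemma hermitian_op_max_eigenvector:
  assumes herm: "hermitian_op X"
  obtains u lam where "inner_c u u = 1" "apply_op X u = (\<lambda>x. complex_of_real lam * u x)"
    "\<And>w. Re (expect w X) \<le> lam * Re (inner_c w w)"
proof -
  obtain u where u_unit: "inner_c u u = 1"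
    and max: "\<forall>w. Re (expect w X) \<le> Re (expect u X) * Re (inner_c w w)"
    using rayleigh_quotient_attains_max by blast
  define lam where "lam = Re (expect u X)"
  define Y where "Y x x' = (if x = x' then complex_of_real lam else 0) - X x x'" for x x'
  have apply_Y: "apply_op Y w = (\<lambda>x. complex_of_real lam * w x - apply_op X w x)" for w
  proof
    fix x
    have "(\<Sum>y\<in>UNIV. (if x = y then complex_of_real lam else 0) * w y)
        = (\<Sum>y\<in>UNIV. if y = x then complex_of_real lam * w x else 0)"
      by (rule sum.cong) auto
    then show "apply_op Y w x = complex_of_real lam * w x - apply_op X w x"
      by (simp add: Y_def apply_op_def left_diff_distrib sum_subtractf)
  qed
  have expect_Y: "expect w Y = complex_of_real lam * inner_c w w - expect w X" for w
    by (simp add: expect_def apply_Y inner_c_def right_diff_distrib sum_subtractf sum_distrib_left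
        mult_ac)
  have "psd_op Y"
    unfolding psd_op_def hermitian_op_def
  proof (intro conjI allI)
    show "Y y x = cnj (Y x y)" for x y
      using hermitian_op_cnj[OF herm, of x y] hermitian_op_cnj[OF herm, of x x] by (auto simp: Y_def)
    show "0 \<le> Re (expect w Y)" for w
      using max by (simp add: expect_Y lam_def)
  qed
  moreover have "Re (expect u Y) = 0"
    by (simp add: expect_Y u_unit lam_def)
  ultimately have "apply_op Y u = (\<lambda>_. 0)"
    by (rule psd_op_expect_zero_imp_null)
  then have "apply_op X u = (\<lambda>x. complex_of_real lam * u x)"
    by (simp add: apply_Y fun_eq_iff)
  with u_unit max that show ?thesis unfolding lam_def by blast
qed

section \<open>Schmidt decomposition\<close>

definition inner_fst :: "('x::finite) vec \<Rightarrow> ('x \<times> 'y) vec \<Rightarrow> 'y vec" where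
  "inner_fst u psi = (\<lambda>y. \<Sum>x\<in>UNIV. cnj (u x) * psi (x, y))"

definition inner_snd :: "('y::finite) vec \<Rightarrow> ('x \<times> 'y) vec \<Rightarrow> 'x vec" where
  "inner_snd f psi = (\<lambda>x. \<Sum>y\<in>UNIV. cnj (f y) * psi (x, y))"

lemma inner_snd_scale: "inner_snd (\<lambda>y. c * f y) psi = (\<lambda>x. cnj c * inner_snd f psi x)"
  by (simp add: inner_snd_def sum_distrib_left mult_ac)

lemma inner_c_inner_snd:
  fixes psi :: "('x::finite \<times> 'y::finite) vec"
  shows "inner_c w (inner_snd f psi) = inner_c f (inner_fst w psi)"
proof -
  have "inner_c w (inner_snd f psi) = (\<Sum>x\<in>UNIV. \<Sum>y\<in>UNIV. cnj (f y) * (cnj (w x) * psi (x, y)))"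
    by (simp add: inner_c_def inner_snd_def sum_distrib_left mult_ac)
  also have "\<dots> = inner_c f (inner_fst w psi)"
    by (subst sum.swap) (simp add: inner_c_def inner_fst_def sum_distrib_left)
  finally show ?thesis .
qed

lemma inner_fst_product_sum:
  assumes "\<forall>x y. psi (x, y) = (\<Sum>j\<in>J. a j x * b j y)"
  shows "inner_fst u psi = (\<lambda>y. \<Sum>j\<in>J. inner_c u (a j) * b j y)"
proof
  fix y
  have "inner_fst u psi y = (\<Sum>x\<in>UNIV. \<Sum>j\<in>J. cnj (u x) * a j x * b j y)"
    using assms by (simp add: inner_fst_def sum_distrib_left mult_ac)
  also have "\<dots> = (\<Sum>j\<in>J. inner_c u (a j) * b j y)"
    by (subst sum.swap) (simp add: inner_c_def sum_distrib_right)
  finally show "inner_fst u psi y = (\<Sum>j\<in>J. inner_c u (a j) * b j y)" .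
qed

lemma inner_snd_product_sum:
  assumes "\<forall>x y. psi (x, y) = (\<Sum>j\<in>J. a j x * b j y)"
  shows "inner_snd f psi = (\<lambda>x. \<Sum>j\<in>J. inner_c f (b j) * a j x)"
proof
  fix x
  have "inner_snd f psi x = (\<Sum>y\<in>UNIV. \<Sum>j\<in>J. cnj (f y) * b j y * a j x)"
    using assms by (simp add: inner_snd_def sum_distrib_left mult_ac)
  also have "\<dots> = (\<Sum>j\<in>J. inner_c f (b j) * a j x)"
    by (subst sum.swap) (simp add: inner_c_def sum_distrib_right)
  finally show "inner_snd f psi x = (\<Sum>j\<in>J. inner_c f (b j) * a j x)" .
qed

lemma inner_fst_minus_product:
  "inner_fst u (\<lambda>(x, y). psi (x, y) - c * v x * f y) = (\<lambda>y. inner_fst u psi y - c * inner_c u v * f y)"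
  by (simp add: inner_fst_def inner_c_def right_diff_distrib sum_subtractf sum_distrib_left mult_ac)

lemma inner_snd_minus_product:
  "inner_snd f (\<lambda>(x, y). psi (x, y) - c * u x * g y) = (\<lambda>x. inner_snd f psi x - c * inner_c f g * u x)"
  by (simp add: inner_snd_def inner_c_def right_diff_distrib sum_subtractf sum_distrib_left mult_ac)

definition reduced_op :: "('x::finite \<times> 'y::finite) vec \<Rightarrow> 'x op" where
  "reduced_op psi = (\<lambda>x x'. \<Sum>y\<in>UNIV. psi (x, y) * cnj (psi (x', y)))"

lemma hermitian_op_reduced_op: "hermitian_op (reduced_op psi)"
  unfolding hermitian_op_def reduced_op_def by (simp add: cnj_sum mult_ac)

lemma apply_op_reduced_op: "apply_op (reduced_op psi) w = inner_snd (inner_fst w psi) psi"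
proof
  fix x
  have "apply_op (reduced_op psi) w x = (\<Sum>x'\<in>UNIV. \<Sum>y\<in>UNIV. w x' * cnj (psi (x', y)) * psi (x, y))"
    by (simp add: apply_op_def reduced_op_def sum_distrib_left mult_ac)
  also have "\<dots> = inner_snd (inner_fst w psi) psi x"
    by (subst sum.swap) (simp add: inner_snd_def inner_fst_def cnj_sum sum_distrib_right)
  finally show "apply_op (reduced_op psi) w x = inner_snd (inner_fst w psi) psi x" .
qed

lemma expect_reduced_op: "expect w (reduced_op psi) = inner_c (inner_fst w psi) (inner_fst w psi)"
  by (simp add: expect_def apply_op_reduced_op inner_c_inner_snd)

lemma expect_reduced_op_pos:
  fixes psi :: "('x::finite \<times> 'y::finite) vec"
  assumes "psi \<noteq> (\<lambda>_. 0)"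
  obtains w where "inner_c w w = 1" "Re (expect w (reduced_op psi)) > 0"
proof -
  obtain x0 y0 where nz: "psi (x0, y0) \<noteq> 0" using assms by fastforce
  define w where "w = (\<lambda>x. if x = x0 then 1 else 0 :: complex)"
  have "inner_fst w psi = (\<lambda>y. psi (x0, y))"
  proof
    show "inner_fst w psi y = psi (x0, y)" for y
      using inner_c_delta_left[of x0 "\<lambda>x. psi (x, y)"] by (simp add: inner_fst_def inner_c_def w_def)
  qed
  then have "Re (expect w (reduced_op psi)) = (\<Sum>y\<in>UNIV. (cmod (psi (x0, y)))\<^sup>2)"
    by (simp add: expect_reduced_op Re_inner_c_self)
  also have "\<dots> \<ge> (cmod (psi (x0, y0)))\<^sup>2"
    by (rule member_le_sum) auto
  finally have "Re (expect w (reduced_op psi)) > 0"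
    using nz by (meson less_le_trans zero_less_power2 norm_eq_zero)
  then show ?thesis by (intro that) (simp_all add: w_def inner_c_delta_left)
qed

lemma singular_pair_exists:
  fixes psi :: "('x::finite \<times> 'y::finite) vec"
  assumes "psi \<noteq> (\<lambda>_. 0)"
  obtains u f and s :: real
  where "inner_c u u = 1" "inner_c f f = 1" "s > 0"
    "inner_fst u psi = (\<lambda>y. complex_of_real s * f y)"
    "inner_snd f psi = (\<lambda>x. complex_of_real s * u x)"
proof -
  obtain u lam where u_unit: "inner_c u u = 1"
    and eigen: "apply_op (reduced_op psi) u = (\<lambda>x. complex_of_real lam * u x)"
    and max: "\<And>w. Re (expect w (reduced_op psi)) \<le> lam * Re (inner_c w w)"
    using hermitian_op_max_eigenvector[OF hermitian_op_reduced_op] by blast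
  obtain w where "inner_c w w = 1" "Re (expect w (reduced_op psi)) > 0"
    using expect_reduced_op_pos[OF assms] by blast
  with max[of w] have "lam > 0" by simp
  define g where "g = inner_fst u psi"
  have g_sq: "inner_c g g = complex_of_real lam"
    using expect_reduced_op[of u psi] eigen u_unit by (simp add: expect_def inner_c_scale_right g_def)
  define s where "s = sqrt lam"
  have s_pos: "s > 0" and s_sq: "s * s = lam"
    using \<open>lam > 0\<close> unfolding s_def by auto
  define f where "f = (\<lambda>y. complex_of_real (1 / s) * g y)"
  have "inner_c f f = 1"
    using s_pos unfolding f_def inner_c_scale_left inner_c_scale_right g_sq s_sq[symmetric]
    by (simp flip: of_real_mult)
  moreover have "inner_fst u psi = (\<lambda>y. complex_of_real s * f y)"
    using s_pos by (simp add: f_def g_def)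
  moreover have "inner_snd f psi = (\<lambda>x. complex_of_real s * u x)"
    using s_pos
    unfolding f_def inner_snd_scale g_def apply_op_reduced_op[symmetric] eigen s_sq[symmetric]
    by simp
  ultimately show ?thesis using that u_unit s_pos by blast
qed

lemma inner_c_orthonormal_sum:
  assumes "orthonormal_fam r e" "k < r"
  shows "inner_c (e k) (\<lambda>x. \<Sum>i<r. c i * e i x) = c k"
proof -
  have "inner_c (e k) (\<lambda>x. \<Sum>i<r. c i * e i x) = (\<Sum>i<r. c i * inner_c (e k) (e i))"
    by (rule inner_c_sum_right)
  also have "\<dots> = (\<Sum>i<r. if i = k then c k else 0)"
    using assms unfolding orthonormal_fam_def by (intro sum.cong) auto
  finally show ?thesis using assms(2) by simp
qed

lemma orthonormal_fam_Cons:
  assumes "orthonormal_fam r e" "inner_c u u = 1" "\<forall>k<r. inner_c u (e k) = 0"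
  shows "orthonormal_fam (Suc r) (case_nat u e)"
  unfolding orthonormal_fam_def
proof (intro allI impI)
  fix i j assume i: "i < Suc r" and j: "j < Suc r"
  show "inner_c (case_nat u e i) (case_nat u e j) = (if i = j then 1 else 0)"
  proof (cases i)
    case 0
    then show ?thesis using assms j unfolding orthonormal_fam_def by (cases j) auto
  next
    case (Suc k)
    then show ?thesis
      using assms i j cnj_inner_c[of u "e k"] unfolding orthonormal_fam_def by (cases j) auto
  qed
qed

lemma schmidt_decomp_product_sum:
  assumes "schmidt_decomp psi r"
  obtains s e f where "\<forall>i<r. s i > 0" "orthonormal_fam r e" "orthonormal_fam r f"
    "\<forall>x y. psi (x, y) = (\<Sum>i<r. (complex_of_real (s i) * e i x) * f i y)"
  using assms unfolding schmidt_decomp_def by (auto simp: mult.assoc)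

lemma schmidt_decomp_zero: "schmidt_decomp (\<lambda>_. 0) 0"
  by (auto simp: schmidt_decomp_def orthonormal_fam_def)

lemma schmidt_decomp_Cons:
  assumes "schmidt_decomp psi r" "inner_c u u = 1" "inner_c f f = 1" "s > 0"
    and "inner_fst u psi = (\<lambda>_. 0)" "inner_snd f psi = (\<lambda>_. 0)"
  shows "schmidt_decomp (\<lambda>(x, y). complex_of_real s * u x * f y + psi (x, y)) (Suc r)"
proof -
  obtain t e g where t_pos: "\<forall>i<r. t i > 0" and e: "orthonormal_fam r e"
    and g: "orthonormal_fam r g"
    and psi: "\<forall>x y. psi (x, y) = (\<Sum>i<r. (complex_of_real (t i) * e i x) * g i y)"
    using assms(1) by (rule schmidt_decomp_product_sum)
  have "complex_of_real (t k) * inner_c u (e k) = inner_c (g k) (inner_fst u psi)" if "k < r" for k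
    unfolding inner_fst_product_sum[OF psi] inner_c_scale_right
    by (rule inner_c_orthonormal_sum[OF g that, symmetric])
  then have "complex_of_real (t k) * inner_c u (e k) = 0" if "k < r" for k
    using that assms(5) by (simp add: inner_c_def)
  then have "\<forall>k<r. inner_c u (e k) = 0" using t_pos by (metis less_irrefl mult_eq_0_iff of_real_eq_0_iff)
  then have e': "orthonormal_fam (Suc r) (case_nat u e)"
    by (rule orthonormal_fam_Cons[OF e assms(2)])
  have "inner_c f (g k) * complex_of_real (t k) = inner_c (e k) (inner_snd f psi)" if "k < r" for k
    unfolding inner_snd_product_sum[OF psi] mult.assoc[symmetric]
    by (rule inner_c_orthonormal_sum[OF e that, symmetric])
  then have "inner_c f (g k) * complex_of_real (t k) = 0" if "k < r" for k
    using that assms(6) by (simp add: inner_c_def)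
  then have "\<forall>k<r. inner_c f (g k) = 0" using t_pos by (metis less_irrefl mult_eq_0_iff of_real_eq_0_iff)
  then have g': "orthonormal_fam (Suc r) (case_nat f g)"
    by (rule orthonormal_fam_Cons[OF g assms(3)])
  have "\<forall>i<Suc r. case_nat s t i > 0" using t_pos assms(4) by (auto split: nat.split)
  moreover have "(\<lambda>(x, y). complex_of_real s * u x * f y + psi (x, y)) =
      (\<lambda>(x, y). \<Sum>i<Suc r. complex_of_real (case_nat s t i) * case_nat u e i x * case_nat f g i y)"
    unfolding sum.lessThan_Suc_shift using psi by (simp add: mult.assoc)
  ultimately show ?thesis
    unfolding schmidt_decomp_def using e' g' by blast
qed

lemma product_sum_remove_dependent:
  fixes d :: "'j \<Rightarrow> 'a::field"
  assumes "finite J" "j0 \<in> J" "d j0 \<noteq> 0" "\<forall>x. (\<Sum>j\<in>J. d j * a j x) = 0"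
    and "\<forall>x y. psi (x, y) = (\<Sum>j\<in>J. a j x * b j y)"
  shows "\<forall>x y. psi (x, y) = (\<Sum>j\<in>J - {j0}. a j x * (b j y - d j / d j0 * b j0 y))"
proof (intro allI)
  fix x y
  have a_j0: "a j0 x = - (\<Sum>j\<in>J - {j0}. d j * a j x) / d j0"
    using assms(4) sum.remove[OF assms(1,2), of "\<lambda>j. d j * a j x"] assms(3)
    by (simp add: eq_neg_iff_add_eq_0 field_simps)
  have "psi (x, y) = a j0 x * b j0 y + (\<Sum>j\<in>J - {j0}. a j x * b j y)"
    using assms(5) sum.remove[OF assms(1,2)] by simp
  also have "\<dots> = (\<Sum>j\<in>J - {j0}. a j x * (b j y - d j / d j0 * b j0 y))"
    unfolding a_j0
    by (simp add: right_diff_distrib sum_subtractf sum_distrib_left sum_divide_distrib mult_ac)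
  finally show "psi (x, y) = (\<Sum>j\<in>J - {j0}. a j x * (b j y - d j / d j0 * b j0 y))" .
qed

lemma product_sum_minus_product:
  assumes psi: "\<forall>x y. psi (x, y) = (\<Sum>j\<in>J. a j x * b j y)"
    and fst: "inner_fst u psi = (\<lambda>y. s * f y)"
  shows "\<forall>x y. psi (x, y) - s * u x * f y = (\<Sum>j\<in>J. (a j x - inner_c u (a j) * u x) * b j y)"
proof (intro allI)
  fix x y
  have "(\<Sum>j\<in>J. (a j x - inner_c u (a j) * u x) * b j y) =
      (\<Sum>j\<in>J. a j x * b j y - u x * (inner_c u (a j) * b j y))"
    by (simp add: algebra_simps)
  also have "\<dots> = psi (x, y) - u x * (\<Sum>j\<in>J. inner_c u (a j) * b j y)"
    using psi by (simp add: sum_subtractf sum_distrib_left)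
  also have "\<dots> = psi (x, y) - u x * (s * f y)"
    using fun_cong[OF fst, of y] unfolding inner_fst_product_sum[OF psi] by simp
  finally show "psi (x, y) - s * u x * f y = (\<Sum>j\<in>J. (a j x - inner_c u (a j) * u x) * b j y)"
    by (simp add: mult_ac)
qed

text \<open>Subtracting the top singular term from a sum of |J| products leaves a sum of fewer
  products: the coefficients d j = <f|b j> give a nontrivial linear dependence among the
  deflated vectors a j - <u|a j> u.\<close>
lemma product_sum_deflate:
  fixes J :: "'j set"
  assumes "finite J" "\<forall>x y. psi (x, y) = (\<Sum>j\<in>J. a j x * b j y)"
    and "inner_c u u = 1" "s \<noteq> 0"
    and fst: "inner_fst u psi = (\<lambda>y. s * f y)" and snd: "inner_snd f psi = (\<lambda>x. s * u x)"
  obtains J' :: "'j set" and a' b' where "finite J'" "card J' < card J"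
    "\<forall>x y. psi (x, y) - s * u x * f y = (\<Sum>j\<in>J'. a' j x * b' j y)"
proof -
  define a' where "a' j x = a j x - inner_c u (a j) * u x" for j x
  define d where "d j = inner_c f (b j)" for j
  have d_a: "(\<Sum>j\<in>J. d j * a j x) = s * u x" for x
    using fun_cong[OF snd, of x] unfolding inner_snd_product_sum[OF assms(2)] d_def .
  have d_u: "(\<Sum>j\<in>J. d j * inner_c u (a j)) = s"
    using inner_c_sum_right[of u d a J] inner_c_scale_right[of u s u] assms(3) by (simp add: d_a)
  have "(\<Sum>j\<in>J. d j * a' j x) = (\<Sum>j\<in>J. d j * a j x) - u x * (\<Sum>j\<in>J. d j * inner_c u (a j))"
    for x by (simp add: a'_def right_diff_distrib sum_subtractf sum_distrib_left mult_ac)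
  then have dependent: "\<forall>x. (\<Sum>j\<in>J. d j * a' j x) = 0"
    by (simp add: d_a d_u)
  obtain j0 where j0: "j0 \<in> J" "d j0 \<noteq> 0"
  proof (rule ccontr)
    assume "\<not> thesis"
    then have "\<forall>j\<in>J. d j = 0" using that by blast
    then have "u = (\<lambda>_. 0)" using d_a assms(4) by (simp add: fun_eq_iff)
    then show False using assms(3) by (simp add: inner_c_def)
  qed
  have "\<forall>x y. psi (x, y) - s * u x * f y = (\<Sum>j\<in>J. a' j x * b j y)"
    unfolding a'_def by (rule product_sum_minus_product[OF assms(2) fst])
  then have rep: "\<forall>x y. psi (x, y) - s * u x * f y =
      (\<Sum>j\<in>J - {j0}. a' j x * (b j y - d j / d j0 * b j0 y))"
    using product_sum_remove_dependent[OF assms(1) j0 dependent,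
        of "\<lambda>(x, y). psi (x, y) - s * u x * f y" b]
    by simp
  have "finite (J - {j0})" using assms(1) by simp
  moreover have "card (J - {j0}) < card J" by (rule card_Diff1_less[OF assms(1) j0(1)])
  ultimately show ?thesis using rep by (rule that)
qed

lemma schmidt_decomp_exists:
  fixes psi :: "('x::finite \<times> 'y::finite) vec" and J :: "'j set"
  assumes "finite J" "\<forall>x y. psi (x, y) = (\<Sum>j\<in>J. a j x * b j y)"
  shows "\<exists>r \<le> card J. schmidt_decomp psi r"
  using assms
proof (induction "card J" arbitrary: J psi a b rule: less_induct)
  case less
  show ?case
  proof (cases "psi = (\<lambda>_. 0)")
    case True
    then show ?thesis using schmidt_decomp_zero by blast
  next
    case False
    then obtain u f s where u: "inner_c u u = 1" and f: "inner_c f f = 1" and "s > 0"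
      and fst: "inner_fst u psi = (\<lambda>y. complex_of_real s * f y)"
      and snd: "inner_snd f psi = (\<lambda>x. complex_of_real s * u x)"
      by (rule singular_pair_exists)
    define psi' where "psi' = (\<lambda>(x, y). psi (x, y) - complex_of_real s * u x * f y)"
    obtain J' :: "'j set" and a' b' where "finite J'" "card J' < card J"
      and rep: "\<forall>x y. psi (x, y) - complex_of_real s * u x * f y = (\<Sum>j\<in>J'. a' j x * b' j y)"
      using product_sum_deflate[OF less.prems u _ fst snd] \<open>s > 0\<close> by auto
    have "\<forall>x y. psi' (x, y) = (\<Sum>j\<in>J'. a' j x * b' j y)"
      using rep unfolding psi'_def by simp
    then obtain r where "r \<le> card J'" and decomp': "schmidt_decomp psi' r"
      using less.hyps[OF \<open>card J' < card J\<close> \<open>finite J'\<close>] by blast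
    have "inner_fst u psi' = (\<lambda>_. 0)" "inner_snd f psi' = (\<lambda>_. 0)"
      unfolding psi'_def inner_fst_minus_product inner_snd_minus_product fst snd u f by simp_all
    then have "schmidt_decomp (\<lambda>(x, y). complex_of_real s * u x * f y + psi' (x, y)) (Suc r)"
      by (rule schmidt_decomp_Cons[OF decomp' u f \<open>s > 0\<close>])
    moreover have "(\<lambda>(x, y). complex_of_real s * u x * f y + psi' (x, y)) = psi"
      by (simp add: psi'_def)
    moreover have "Suc r \<le> card J" using \<open>r \<le> card J'\<close> \<open>card J' < card J\<close> by simp
    ultimately show ?thesis by auto
  qed
qed

lemma product_sum_basis:
  fixes psi :: "('x::finite \<times> 'y) vec"
  shows "\<forall>x y. psi (x, y) = (\<Sum>j\<in>UNIV. (if x = j then 1 else 0) * psi (j, y))"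
proof (intro allI)
  fix x y
  have "(\<Sum>j\<in>UNIV. (if x = j then 1 else 0) * psi (j, y)) = (\<Sum>j\<in>UNIV. if j = x then psi (x, y) else 0)"
    by (rule sum.cong) auto
  then show "psi (x, y) = (\<Sum>j\<in>UNIV. (if x = j then 1 else 0) * psi (j, y))" by simp
qed

lemma schmidt_decomp_schmidt_rank: "schmidt_decomp psi (schmidt_rank psi)"
proof -
  obtain r where "schmidt_decomp psi r"
    using schmidt_decomp_exists[OF finite_class.finite_UNIV product_sum_basis[of psi]] by blast
  then show ?thesis unfolding schmidt_rank_def by (rule LeastI)
qed

lemma schmidt_rank_product_sum:
  obtains a b where "\<forall>x y. psi (x, y) = (\<Sum>i<schmidt_rank psi. a i x * b i y)"
proof -
  obtain s e f where "\<forall>i<schmidt_rank psi. s i > 0" "orthonormal_fam (schmidt_rank psi) e"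
    "orthonormal_fam (schmidt_rank psi) f"
    and "\<forall>x y. psi (x, y) = (\<Sum>i<schmidt_rank psi. (complex_of_real (s i) * e i x) * f i y)"
    by (rule schmidt_decomp_product_sum[OF schmidt_decomp_schmidt_rank])
  then show ?thesis by (intro that)
qed

lemma schmidt_rank_le_card_product_sum:
  assumes "finite J" "\<forall>x y. psi (x, y) = (\<Sum>j\<in>J. a j x * b j y)"
  shows "schmidt_rank psi \<le> card J"
proof -
  obtain r where "r \<le> card J" "schmidt_decomp psi r"
    using schmidt_decomp_exists[OF assms] by blast
  then show ?thesis unfolding schmidt_rank_def using Least_le[of "schmidt_decomp psi" r] by linarith
qed

lemma schmidt_rank_le_card_fst: "schmidt_rank (psi :: ('x::finite \<times> 'y::finite) vec) \<le> CARD('x)"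
  by (rule schmidt_rank_le_card_product_sum[OF finite_class.finite_UNIV product_sum_basis])

section \<open>Positive operators as sums of projectors\<close>

lemma psd_op_diag_zero:
  assumes "psd_op X" "X a a = 0"
  shows "X u a = 0" "X a u = 0"
proof -
  have "Re (expect (\<lambda>x. if x = a then 1 else 0) X) = 0"
    using assms(2) by (simp add: expect_def apply_op_delta inner_c_delta_left)
  then have "apply_op X (\<lambda>x. if x = a then 1 else 0) = (\<lambda>_. 0)"
    by (rule psd_op_expect_zero_imp_null[OF assms(1)])
  then show col: "X u a = 0" for u
    unfolding apply_op_delta by metis
  show "X a u = 0"
    using assms(1) hermitian_op_cnj[of X u a] col[of u] unfolding psd_op_def by simp
qed

lemma psd_op_diag_real_nonneg:
  assumes "psd_op X"
  shows "X a a = complex_of_real (Re (X a a))" "0 \<le> Re (X a a)"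
proof -
  show "X a a = complex_of_real (Re (X a a))"
    using assms hermitian_op_cnj[of X a a] unfolding psd_op_def by (simp add: complex_eq_iff)
  have "0 \<le> Re (expect (\<lambda>x. if x = a then 1 else 0) X)"
    using assms unfolding psd_op_def by blast
  then show "0 \<le> Re (X a a)" by (simp add: expect_def apply_op_delta inner_c_delta_left)
qed

text \<open>One step of a Cholesky factorisation: completing the square in the coordinate a shows
  that subtracting the rank-one part through row a preserves positivity.\<close>
lemma psd_op_deflate:
  assumes psd: "psd_op X" and diag: "X a a = complex_of_real r" and "r > 0"
  shows "psd_op (\<lambda>u w. X u w - complex_of_real (1 / r) * proj (\<lambda>u. X u a) u w)"
    (is "psd_op ?X'")
proof -
  have herm: "hermitian_op X" and pos: "\<And>v. 0 \<le> Re (expect v X)"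
    using psd unfolding psd_op_def by auto
  define v where "v = (\<lambda>u. X u a)"
  define da where "da = (\<lambda>x. if x = a then (1::complex) else 0)"
  have "hermitian_op ?X'"
    unfolding hermitian_op_def proj_def using hermitian_op_cnj[OF herm] by simp
  moreover have "0 \<le> Re (expect z ?X')" for z
  proof -
    define c where "c = inner_c z v"
    define t where "t = - cnj c / complex_of_real r"
    have z_da: "inner_c z (apply_op X da) = c"
      unfolding c_def v_def da_def apply_op_delta ..
    then have da_z: "inner_c da (apply_op X z) = cnj c"
      using hermitian_op_inner_swap[OF herm, of da z] by simp
    have "expect (\<lambda>x. z x + t * da x) X = expect z X + (cnj t * cnj c + t * c + cnj t * t * X a a)"
      unfolding expect_add_scale z_da da_z
      by (simp add: da_def expect_def apply_op_delta inner_c_delta_left add.assoc)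
    also have "cnj t * cnj c + t * c + cnj t * t * X a a = - complex_of_real (1 / r) * (c * cnj c)"
      using \<open>r > 0\<close> unfolding diag t_def by (simp add: field_simps)
    also have "expect z X + - complex_of_real (1 / r) * (c * cnj c) = expect z ?X'"
      unfolding expect_diff expect_smult expect_proj v_def[symmetric] c_def cnj_inner_c by simp
    finally show ?thesis using pos by metis
  qed
  ultimately show ?thesis unfolding psd_op_def by blast
qed

lemma hermitian_op_deflate_support:
  assumes herm: "hermitian_op X" and diag: "X a a = complex_of_real r" and "r \<noteq> 0"
    and supp: "\<forall>u w. u \<notin> insert a S \<or> w \<notin> insert a S \<longrightarrow> X u w = 0"
  shows "\<forall>u w. u \<notin> S \<or> w \<notin> S \<longrightarrow> X u w - complex_of_real (1 / r) * proj (\<lambda>u. X u a) u w = 0"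
proof (intro allI impI)
  fix u w assume "u \<notin> S \<or> w \<notin> S"
  moreover have "X a w - complex_of_real (1 / r) * proj (\<lambda>u. X u a) a w = 0"
    "X u a - complex_of_real (1 / r) * proj (\<lambda>u. X u a) u a = 0"
    using \<open>r \<noteq> 0\<close> hermitian_op_cnj[OF herm, of w a] hermitian_op_cnj[OF herm, of a a]
    unfolding proj_def diag by (simp_all add: field_simps)
  ultimately show "X u w - complex_of_real (1 / r) * proj (\<lambda>u. X u a) u w = 0"
    using supp unfolding proj_def by (cases "u = a \<or> w = a") auto
qed

lemma psd_op_proj_decomp_on:
  fixes X :: "('i::finite) op"
  assumes "finite S" "psd_op X" "\<forall>u w. u \<notin> S \<or> w \<notin> S \<longrightarrow> X u w = 0"
  shows "\<exists>(n::nat) c psi. (\<forall>i<n. c i \<ge> 0) \<and>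
           X = (\<lambda>u v. \<Sum>i<n. complex_of_real (c i) * proj (psi i) u v)"
  using assms
proof (induction S arbitrary: X rule: finite_induct)
  case empty
  then have "X = (\<lambda>u v. 0)" by auto
  then show ?case by (intro exI[where x = "0::nat"]) simp
next
  case (insert a S)
  show ?case
  proof (cases "X a a = 0")
    case True
    then have "\<forall>u w. u \<notin> S \<or> w \<notin> S \<longrightarrow> X u w = 0"
      using insert.prems psd_op_diag_zero[OF insert.prems(1) True] by (metis insertE)
    then show ?thesis by (rule insert.IH[OF insert.prems(1)])
  next
    case False
    define r where "r = Re (X a a)"
    have diag: "X a a = complex_of_real r" and "r \<ge> 0"
      using psd_op_diag_real_nonneg[OF insert.prems(1), of a] unfolding r_def by auto
    with False have "r > 0" by auto
    define v where "v = (\<lambda>u. X u a)"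
    define X' where "X' u w = X u w - complex_of_real (1 / r) * proj v u w" for u w
    have "psd_op X'"
      unfolding X'_def v_def by (rule psd_op_deflate[OF insert.prems(1) diag \<open>r > 0\<close>])
    moreover have "\<forall>u w. u \<notin> S \<or> w \<notin> S \<longrightarrow> X' u w = 0"
      using insert.prems(1) \<open>r > 0\<close> unfolding X'_def v_def psd_op_def
      by (intro hermitian_op_deflate_support[OF _ diag _ insert.prems(2)]) auto
    ultimately have "\<exists>(n::nat) c psi. (\<forall>i<n. c i \<ge> 0) \<and>
        X' = (\<lambda>u v. \<Sum>i<n. complex_of_real (c i) * proj (psi i) u v)"
      by (rule insert.IH)
    then obtain n :: nat and c psi where c: "\<forall>i<n. c i \<ge> 0"
      and X': "X' = (\<lambda>u v. \<Sum>i<n. complex_of_real (c i) * proj (psi i) u v)"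
      by blast
    have "X = (\<lambda>u w. \<Sum>i<Suc n. complex_of_real ((c(n := 1 / r)) i) * proj ((psi(n := v)) i) u w)"
      using fun_cong[OF fun_cong[OF X']] by (simp add: X'_def fun_eq_iff algebra_simps)
    moreover have "\<forall>i<Suc n. (c(n := 1 / r)) i \<ge> 0" using c \<open>r > 0\<close> by simp
    ultimately show ?thesis by (intro exI conjI)
  qed
qed

lemma psd_op_proj_decomp:
  fixes X :: "('i::finite) op"
  assumes "psd_op X"
  shows "\<exists>(n::nat) c psi. (\<forall>i<n. c i \<ge> 0) \<and>
           X = (\<lambda>u v. \<Sum>i<n. complex_of_real (c i) * proj (psi i) u v)"
  using psd_op_proj_decomp_on[OF finite_class.finite_UNIV assms] by simp

lemma sn_le_schmidt_number:
  fixes rho :: "('x::finite \<times> 'y::finite) op"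
  assumes "psd_op rho"
  shows "sn_le rho (schmidt_number rho)"
proof -
  obtain n :: nat and c psi where "\<forall>i<n. c i \<ge> 0"
    and "rho = (\<lambda>u v. \<Sum>i<n. complex_of_real (c i) * proj (psi i) u v)"
    using psd_op_proj_decomp[OF assms] by blast
  then have "sn_le rho CARD('x)"
    unfolding sn_le_def using schmidt_rank_le_card_fst by blast
  then show ?thesis unfolding schmidt_number_def by (rule LeastI)
qed

section \<open>Tensor products\<close>

text \<open>psi \<circ> regroup reads a vector on (A1 A2) \<times> (B1 B2) as one on (A1 B1) \<times> (A2 B2), so
  inner_fst phi (psi \<circ> regroup) is the partial inner product of psi with phi over A1 B1.\<close>
definition regroup :: "('a \<times> 'b) \<times> ('c \<times> 'd) \<Rightarrow> ('a \<times> 'c) \<times> ('b \<times> 'd)" where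
  "regroup = (\<lambda>((a, b), (c, d)). ((a, c), (b, d)))"

lemma regroup_regroup [simp]: "regroup (regroup p) = p"
  by (simp add: regroup_def split_beta)

lemma sum_regroup:
  fixes h :: "(('a1::finite \<times> 'a2::finite) \<times> ('b1::finite \<times> 'b2::finite)) \<Rightarrow> complex"
  shows "(\<Sum>x\<in>UNIV. h x) = (\<Sum>p\<in>UNIV. \<Sum>q\<in>UNIV. h (regroup (p, q)))"
proof -
  have "(\<Sum>x\<in>UNIV. h x) = (\<Sum>pq\<in>UNIV. h (regroup pq))"
    by (rule sum.reindex_bij_witness[of _ regroup regroup]) simp_all
  also have "\<dots> = (\<Sum>p\<in>UNIV. \<Sum>q\<in>UNIV. h (regroup (p, q)))"
    unfolding sum.cartesian_product UNIV_Times_UNIV by (simp add: case_prod_beta')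
  finally show ?thesis .
qed

lemma tensor_op_regroup: "tensor_op S E (regroup (p, q)) (regroup (p', q')) = S p p' * E q q'"
  by (cases p; cases q; cases p'; cases q') (simp add: tensor_op_def regroup_def)

lemma hermitian_op_tensor_op:
  assumes "hermitian_op S" "hermitian_op E"
  shows "hermitian_op (tensor_op S E)"
  unfolding hermitian_op_def
proof (intro allI)
  fix x y
  show "tensor_op S E y x = cnj (tensor_op S E x y)"
    using hermitian_op_cnj[OF assms(1)] hermitian_op_cnj[OF assms(2)]
    by (cases x; cases y) (auto simp: tensor_op_def)
qed

lemma tensor_op_sum_left:
  "tensor_op (\<lambda>u v. \<Sum>i\<in>I. k i * S i u v) E = (\<lambda>x y. \<Sum>i\<in>I. k i * tensor_op (S i) E x y)"
  unfolding tensor_op_def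
  by (intro ext) (auto simp: sum_distrib_right mult.assoc split: prod.splits)

lemma expect_sum: "expect psi (\<lambda>x y. \<Sum>i\<in>I. k i * T i x y) = (\<Sum>i\<in>I. k i * expect psi (T i))"
proof -
  have "expect psi (\<lambda>x y. \<Sum>i\<in>I. k i * T i x y) =
      (\<Sum>x\<in>UNIV. \<Sum>i\<in>I. \<Sum>y\<in>UNIV. k i * (cnj (psi x) * T i x y * psi y))"
    unfolding expect_def inner_c_def apply_op_def
    by (simp add: sum_distrib_left sum_distrib_right mult_ac) (rule sum.cong[OF refl], rule sum.swap)
  also have "\<dots> = (\<Sum>i\<in>I. k i * expect psi (T i))"
    unfolding expect_def inner_c_def apply_op_def
    by (subst sum.swap) (simp add: sum_distrib_left sum_distrib_right mult_ac)
  finally show ?thesis .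
qed

lemma expect_tensor_op_proj:
  "expect psi (tensor_op (proj phi) eta) = expect (inner_fst phi (psi \<circ> regroup)) eta"
proof -
  define chi where "chi = inner_fst phi (psi \<circ> regroup)"
  have apply_regroup: "apply_op (tensor_op (proj phi) eta) psi (regroup (p, q)) =
      phi p * apply_op eta chi q" for p q
  proof -
    have "apply_op (tensor_op (proj phi) eta) psi (regroup (p, q)) =
        (\<Sum>p'\<in>UNIV. \<Sum>q'\<in>UNIV. phi p * (eta q q' * (cnj (phi p') * psi (regroup (p', q')))))"
      unfolding apply_op_def sum_regroup tensor_op_regroup proj_def by (simp add: mult_ac)
    also have "\<dots> = phi p * apply_op eta chi q"
      by (subst sum.swap) (simp add: apply_op_def chi_def inner_fst_def sum_distrib_left)
    finally show ?thesis .
  qed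
  have "expect psi (tensor_op (proj phi) eta) =
      (\<Sum>q\<in>UNIV. \<Sum>p\<in>UNIV. cnj (cnj (phi p) * psi (regroup (p, q))) * apply_op eta chi q)"
    unfolding expect_def inner_c_def sum_regroup apply_regroup
    by (subst sum.swap) (simp add: mult_ac)
  also have "\<dots> = expect chi eta"
    by (simp add: expect_def inner_c_def chi_def inner_fst_def cnj_sum sum_distrib_right)
  finally show ?thesis unfolding chi_def .
qed

lemma inner_fst_regroup_product_sum:
  fixes phi :: "('a1::finite \<times> 'b1::finite) vec"
    and psi :: "(('a1 \<times> 'a2::finite) \<times> ('b1 \<times> 'b2::finite)) vec"
  assumes phi: "\<forall>x y. phi (x, y) = (\<Sum>l\<in>L. \<alpha> l x * \<beta> l y)"
    and psi: "\<forall>x y. psi (x, y) = (\<Sum>j\<in>J. a j x * b j y)"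
  shows "\<forall>x y. inner_fst phi (psi \<circ> regroup) (x, y) =
    (\<Sum>lj\<in>L \<times> J. inner_fst (\<alpha> (fst lj)) (a (snd lj)) x * inner_fst (\<beta> (fst lj)) (b (snd lj)) y)"
proof (intro allI)
  fix x y
  have "inner_fst phi (psi \<circ> regroup) (x, y) =
      (\<Sum>a1\<in>UNIV. \<Sum>b1\<in>UNIV. cnj (phi (a1, b1)) * psi ((a1, x), (b1, y)))"
    unfolding inner_fst_def sum.cartesian_product UNIV_Times_UNIV
    by (simp add: split_beta regroup_def)
  also have "\<dots> = (\<Sum>a1\<in>UNIV. \<Sum>b1\<in>UNIV. \<Sum>(l, j)\<in>L \<times> J.
      (cnj (\<alpha> l a1) * a j (a1, x)) * (cnj (\<beta> l b1) * b j (b1, y)))"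
    using phi psi
    by (simp add: cnj_sum sum_product sum.cartesian_product mult_ac)
  also have "\<dots> = (\<Sum>lj\<in>L \<times> J. inner_fst (\<alpha> (fst lj)) (a (snd lj)) x * inner_fst (\<beta> (fst lj)) (b (snd lj)) y)"
    unfolding inner_fst_def sum_product
    by (subst sum.swap, subst (2) sum.swap) (simp add: split_beta)
  finally show "inner_fst phi (psi \<circ> regroup) (x, y) =
    (\<Sum>lj\<in>L \<times> J. inner_fst (\<alpha> (fst lj)) (a (snd lj)) x * inner_fst (\<beta> (fst lj)) (b (snd lj)) y)" .
qed

lemma schmidt_rank_inner_fst_regroup:
  fixes phi :: "('a1::finite \<times> 'b1::finite) vec"
    and psi :: "(('a1 \<times> 'a2::finite) \<times> ('b1 \<times> 'b2::finite)) vec"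
  shows "schmidt_rank (inner_fst phi (psi \<circ> regroup)) \<le> schmidt_rank phi * schmidt_rank psi"
proof -
  obtain \<alpha> \<beta> where phi: "\<forall>x y. phi (x, y) = (\<Sum>l<schmidt_rank phi. \<alpha> l x * \<beta> l y)"
    by (rule schmidt_rank_product_sum)
  obtain a b where psi: "\<forall>x y. psi (x, y) = (\<Sum>j<schmidt_rank psi. a j x * b j y)"
    by (rule schmidt_rank_product_sum)
  have "schmidt_rank (inner_fst phi (psi \<circ> regroup)) \<le> card ({..<schmidt_rank phi} \<times> {..<schmidt_rank psi})"
    by (rule schmidt_rank_le_card_product_sum[OF _ inner_fst_regroup_product_sum[OF phi psi]]) simp
  then show ?thesis by (simp add: card_cartesian_product)
qed

theorem lemma1:
  fixes sigma :: "(('a1::finite) \<times> ('b1::finite)) op"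
    and eta :: "(('a2::finite) \<times> ('b2::finite)) op"
    and N K :: nat
  assumes "N \<ge> 1" and "K \<ge> 1"
    and "psd_op sigma" and "schmidt_number sigma = N"
    and "pos_on_SN eta (K * N)"
  shows "pos_on_SN (tensor_op sigma eta) K"
proof -
  have herm: "hermitian_op (tensor_op sigma eta)"
    using assms(3,5) by (intro hermitian_op_tensor_op) (simp_all add: psd_op_def pos_on_SN_def)
  obtain n :: nat and c phi where c: "\<forall>i<n. c i \<ge> 0 \<and> schmidt_rank (phi i) \<le> N"
    and sigma: "sigma = (\<lambda>u v. \<Sum>i<n. complex_of_real (c i) * proj (phi i) u v)"
    using sn_le_schmidt_number[OF assms(3)] unfolding sn_le_def assms(4) by blast
  have "0 \<le> Re (expect psi (tensor_op sigma eta))" if "schmidt_rank psi \<le> K" for psi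
  proof -
    define chi where "chi i = inner_fst (phi i) (psi \<circ> regroup)" for i
    have "schmidt_rank (chi i) \<le> K * N" if "i < n" for i
      using schmidt_rank_inner_fst_regroup[of "phi i" psi] c that \<open>schmidt_rank psi \<le> K\<close>
        mult_le_mono[of "schmidt_rank (phi i)" N "schmidt_rank psi" K]
      unfolding chi_def by (simp add: mult.commute)
    then have "0 \<le> c i * Re (expect (chi i) eta)" if "i < n" for i
      using assms(5) c that unfolding pos_on_SN_def by simp
    moreover have "expect psi (tensor_op sigma eta) = (\<Sum>i<n. complex_of_real (c i) * expect (chi i) eta)"
      unfolding sigma tensor_op_sum_left expect_sum expect_tensor_op_proj chi_def ..
    ultimately show ?thesis by (auto simp: Re_sum intro!: sum_nonneg)
  qed
  with herm show ?thesis unfolding pos_on_SN_def by blast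
qed

end
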